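(* Let $\mathcal R$ be a pcDCTRS and $\mathcal R_f=\mathbf I(\mathcal R)$ its injectivization. Then $\mathcal R_f$ is a pcDCTRS and, for every basic ground term $s$, every term $t$ and trace term $\pi$: $\langle s,[\,]\rangle\stackrel{\mathsf c}{\rightharpoonup}_{\mathcal R}\langle t,\pi\rangle$ if and only if $s^{\mathtt i}\xrightarrow{\mathsf c}_{\mathcal R_f}\langle t,\widehat{\pi}\rangle$.
   Context: A DCTRS is a finite set of labelled conditional rules $\beta: l\to r\Leftarrow s_1\twoheadrightarrow t_1,\dots,s_n\twoheadrightarrow t_n$ ($l$ not a variable) with $\mathrm{Var}(r)\subseteq\mathrm{Var}(l,s_1,\dots,s_n,t_1,\dots,t_n)$ and $\mathrm{Var}(s_i)\subseteq\mathrm{Var}(l,t_1,\dots,t_{i-1})$; labels are unique, rule variables never renamed. Defined symbols are the roots of left-hand sides, constructors the rest; constructor terms use only constructors and variables; a basic term is $f(u_1,\dots,u_k)$ with $f$ defined and the $u_j$ constructor terms. A pcDCTRS is a DCTRS where in each rule $l$ and all $s_i$ are basic and $r$ and all $t_i$ are constructor terms. For a rule $\beta$ let $V_\beta=(\mathrm{Var}(l)\setminus\mathrm{Var}(r,s_1,\dots,s_n,t_1,\dots,t_n))\cup\bigcup_{i=1}^n(\mathrm{Var}(t_i)\setminus\mathrm{Var}(r,s_{i+1},\dots,s_n))$. Constructor reduction $\xrightarrow{\mathsf c}_{\mathcal S}$ on ground terms (least relation): $s\xrightarrow{\mathsf c}_{\mathcal S}t$ iff there are a position $p$ of $s$ with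 no reducible proper subterm of $s|_p$, a rule $l\to r\Leftarrow s_1\twoheadrightarrow t_1,\dots,s_n\twoheadrightarrow t_n\in\mathcal S$ and a ground constructor substitution $\sigma$ with $s|_p=l\sigma$, $s_i\sigma\xrightarrow{\mathsf c}{}^{*}_{\mathcal S}t_i\sigma$ for all $i$, $t=s[r\sigma]_p$. Positionless traces: $[\,]$ is a trace; if $\pi,\pi_1,\dots,\pi_n$ are traces, $\beta$ labels a rule with $n$ conditions and $\sigma$ is a ground substitution, then $\beta(\sigma,\pi_1,\dots,\pi_n):\pi$ is a trace; a trace term $\pi$ is identified with the singleton list $[\pi]$. Safe: every trace term $\beta(\sigma,\pi_1,\dots,\pi_n)$ occurring has $\sigma$ ground, $\mathrm{Dom}(\sigma)=V_\beta$, and $\pi_i$ safe. Reversible constructor (top) rewriting on safe pairs (least relation): $\langle s,\pi\rangle\stackrel{\mathsf c}{\rightharpoonup}_{\mathcal R}\langle t,\beta(\sigma',\pi_1,\dots,\pi_n):\pi\rangle$ iff there are a rule $\beta$ and a ground constructor substitution $\sigma$ with $s=l\sigma$, $\langle s_i\sigma,[\,]\rangle\stackrel{\mathsf c}{\rightharpoonup}{}^{*}_{\mathcal R}\langle t_i\sigma,\pi_i\rangle$ for all $i$, $t=r\sigma$, $\sigma'=\sigma|_{V_\beta}$. Injectivization $\mathbf I(\mathcal R)$: introduce a fresh binary constructor $\langle\cdot,\cdot\rangle$, for each rule label $\beta$ a fresh constructor $\beta$ of appropriate arity, and for each defined $f$ a fresh defined symbol $f^{\mathtt i}$; for a basic term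 $u=f(\vec u)$ let $u^{\mathtt i}=f^{\mathtt i}(\vec u)$. Each rule $\beta: l\to r\Leftarrow s_1\twoheadrightarrow t_1,\dots,s_n\twoheadrightarrow t_n$ is replaced by $l^{\mathtt i}\to\langle r,\beta(y_1,\dots,y_m,w_1,\dots,w_n)\rangle\Leftarrow s_1^{\mathtt i}\twoheadrightarrow\langle t_1,w_1\rangle,\dots,s_n^{\mathtt i}\twoheadrightarrow\langle t_n,w_n\rangle$, where $y_1,\dots,y_m$ are the variables of $V_\beta$ in lexicographic order and $w_1,\dots,w_n$ are fresh variables. For a trace term $\pi=\beta(\{y_1\mapsto u_1,\dots,y_m\mapsto u_m\},\pi_1,\dots,\pi_n)$ with $y_1,\dots,y_m$ in lexicographic order, $\widehat\pi=\beta(u_1,\dots,u_m,\widehat{\pi_1},\dots,\widehat{\pi_n})$ (recursively). *)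

theory Defs
  imports Main
begin

datatype ('f, 'v) "term" = Var 'v | Fun 'f "('f, 'v) term list"

fun vars :: "('f, 'v) term \<Rightarrow> 'v set" where
  "vars (Var x) = {x}"
| "vars (Fun f ts) = \<Union> (vars ` set ts)"

fun funs :: "('f, 'v) term \<Rightarrow> 'f set" where
  "funs (Var x) = {}"
| "funs (Fun f ts) = insert f (\<Union> (funs ` set ts))"

definition ground :: "('f, 'v) term \<Rightarrow> bool" where
  "ground t \<longleftrightarrow> vars t = {}"

fun subst :: "('v \<Rightarrow> ('f, 'w) term) \<Rightarrow> ('f, 'v) term \<Rightarrow> ('f, 'w) term" where
  "subst \<sigma> (Var x) = \<sigma> x"
| "subst \<sigma> (Fun f ts) = Fun f (map (subst \<sigma>) ts)"

fun subterms :: "('f, 'v) term \<Rightarrow> ('f, 'v) term set" where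
  "subterms (Var x) = {Var x}"
| "subterms (Fun f ts) = insert (Fun f ts) (\<Union> (subterms ` set ts))"

fun psubterms :: "('f, 'v) term \<Rightarrow> ('f, 'v) term set" where
  "psubterms (Var x) = {}"
| "psubterms (Fun f ts) = \<Union> (subterms ` set ts)"

text \<open>A rule  l \<rightarrow> r \<Leftarrow> s1 \<twoheadrightarrow> t1, ..., sn \<twoheadrightarrow> tn  is (l, r, [(s1,t1),...,(sn,tn)]);
  a labelled rule system is a set of pairs (label, rule).\<close>

type_synonym ('f, 'v) crule = "('f, 'v) term \<times> ('f, 'v) term \<times> (('f, 'v) term \<times> ('f, 'v) term) list"
type_synonym ('l, 'f, 'v) lctrs = "('l \<times> ('f, 'v) crule) set"

definition lhs :: "('f, 'v) crule \<Rightarrow> ('f, 'v) term" where "lhs \<rho> = fst \<rho>"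
definition rhs :: "('f, 'v) crule \<Rightarrow> ('f, 'v) term" where "rhs \<rho> = fst (snd \<rho>)"
definition conds :: "('f, 'v) crule \<Rightarrow> (('f, 'v) term \<times> ('f, 'v) term) list" where
  "conds \<rho> = snd (snd \<rho>)"

definition cvars :: "(('f, 'v) term \<times> ('f, 'v) term) list \<Rightarrow> 'v set" where
  "cvars cs = (\<Union>(s, t) \<in> set cs. vars s \<union> vars t)"

definition rule_vars :: "('f, 'v) crule \<Rightarrow> 'v set" where
  "rule_vars \<rho> = vars (lhs \<rho>) \<union> vars (rhs \<rho>) \<union> cvars (conds \<rho>)"

definition is_dctrs :: "('l, 'f, 'v) lctrs \<Rightarrow> bool" where
  "is_dctrs R \<longleftrightarrow> finite R
    \<and> (\<forall>(\<beta>, \<rho>) \<in> R. \<forall>(\<beta>', \<rho>') \<in> R. \<beta> = \<beta>' \<longrightarrow> \<rho> = \<rho>')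
    \<and> (\<forall>(\<beta>, \<rho>) \<in> R.
         (\<exists>f ts. lhs \<rho> = Fun f ts)
       \<and> vars (rhs \<rho>) \<subseteq> vars (lhs \<rho>) \<union> cvars (conds \<rho>)
       \<and> (\<forall>i < length (conds \<rho>).
            vars (fst (conds \<rho> ! i)) \<subseteq> vars (lhs \<rho>) \<union> (\<Union>j<i. vars (snd (conds \<rho> ! j)))))"

definition defs :: "('l, 'f, 'v) lctrs \<Rightarrow> 'f set" where
  "defs R = {f. \<exists>(\<beta>, \<rho>) \<in> R. \<exists>ts. lhs \<rho> = Fun f ts}"

definition constr_term :: "('l, 'f, 'v) lctrs \<Rightarrow> ('f, 'w) term \<Rightarrow> bool" where
  "constr_term R t \<longleftrightarrow> funs t \<inter> defs R = {}"

definition basic :: "('l, 'f, 'v) lctrs \<Rightarrow> ('f, 'w) term \<Rightarrow> bool" where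
  "basic R t \<longleftrightarrow> (\<exists>f us. t = Fun f us \<and> f \<in> defs R \<and> (\<forall>u \<in> set us. constr_term R u))"

definition is_pcdctrs :: "('l, 'f, 'v) lctrs \<Rightarrow> bool" where
  "is_pcdctrs R \<longleftrightarrow> is_dctrs R \<and> (\<forall>(\<beta>, \<rho>) \<in> R.
      basic R (lhs \<rho>) \<and> constr_term R (rhs \<rho>)
      \<and> (\<forall>(s, t) \<in> set (conds \<rho>). basic R s \<and> constr_term R t))"

definition gc_subst :: "('l, 'f, 'v) lctrs \<Rightarrow> 'v set \<Rightarrow> ('v \<Rightarrow> ('f, 'v) term) \<Rightarrow> bool" where
  "gc_subst R X \<sigma> \<longleftrightarrow> (\<forall>x \<in> X. ground (\<sigma> x) \<and> constr_term R (\<sigma> x))"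

definition Vb :: "('f, 'v) crule \<Rightarrow> 'v set" where
  "Vb \<rho> = (vars (lhs \<rho>) - (vars (rhs \<rho>) \<union> cvars (conds \<rho>)))
     \<union> (\<Union>i < length (conds \<rho>).
          vars (snd (conds \<rho> ! i)) - (vars (rhs \<rho>) \<union> cvars (drop (Suc i) (conds \<rho>))))"

text \<open>The side condition "no reducible proper subterm of the redex"
  is rendered as "no proper subterm of the redex is lhs-matchable"; for the pcDCTRSs to which
  the relation is applied here this condition is vacuous.\<close>
definition lhs_match :: "('l, 'f, 'v) lctrs \<Rightarrow> ('f, 'v) term \<Rightarrow> bool" where
  "lhs_match R u \<longleftrightarrow> (\<exists>(\<beta>, \<rho>) \<in> R. \<exists>\<sigma>. gc_subst R (rule_vars \<rho>) \<sigma> \<and> u = subst \<sigma> (lhs \<rho>))"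

inductive cstep :: "('l, 'f, 'v) lctrs \<Rightarrow> ('f, 'v) term \<Rightarrow> ('f, 'v) term \<Rightarrow> bool"
  for R :: "('l, 'f, 'v) lctrs" where
  top: "(\<beta>, \<rho>) \<in> R \<Longrightarrow> gc_subst R (rule_vars \<rho>) \<sigma>
    \<Longrightarrow> (\<forall>u \<in> psubterms (subst \<sigma> (lhs \<rho>)). \<not> lhs_match R u)
    \<Longrightarrow> (\<forall>i < length (conds \<rho>).
          (cstep R)\<^sup>*\<^sup>* (subst \<sigma> (fst (conds \<rho> ! i))) (subst \<sigma> (snd (conds \<rho> ! i))))
    \<Longrightarrow> cstep R (subst \<sigma> (lhs \<rho>)) (subst \<sigma> (rhs \<rho>))"
| ctxt: "cstep R u u' \<Longrightarrow> (\<forall>v \<in> set ss \<union> set ts. ground v)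
    \<Longrightarrow> cstep R (Fun f (ss @ u # ts)) (Fun f (ss @ u' # ts))"

datatype ('l, 'f, 'v) trace_term =
  TT 'l "'v \<rightharpoonup> ('f, 'v) term" "('l, 'f, 'v) trace_term list list"

type_synonym ('l, 'f, 'v) trace = "('l, 'f, 'v) trace_term list"

fun safe_tt :: "('l, 'f, 'v) lctrs \<Rightarrow> ('l, 'f, 'v) trace_term \<Rightarrow> bool" where
  "safe_tt R (TT \<beta> \<sigma> \<pi>s) \<longleftrightarrow>
     (\<exists>\<rho>. (\<beta>, \<rho>) \<in> R \<and> length \<pi>s = length (conds \<rho>) \<and> dom \<sigma> = Vb \<rho>)
     \<and> (\<forall>y \<in> dom \<sigma>. ground (the (\<sigma> y)))
     \<and> (\<forall>\<pi> \<in> set \<pi>s. \<forall>p \<in> set \<pi>. safe_tt R p)"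

definition safe_trace :: "('l, 'f, 'v) lctrs \<Rightarrow> ('l, 'f, 'v) trace \<Rightarrow> bool" where
  "safe_trace R \<pi> \<longleftrightarrow> (\<forall>p \<in> set \<pi>. safe_tt R p)"

definition restr :: "('v \<Rightarrow> ('f, 'v) term) \<Rightarrow> 'v set \<Rightarrow> 'v \<rightharpoonup> ('f, 'v) term" where
  "restr \<sigma> X = (\<lambda>x. if x \<in> X then Some (\<sigma> x) else None)"

inductive rstep :: "('l, 'f, 'v) lctrs \<Rightarrow> ('f, 'v) term \<times> ('l, 'f, 'v) trace
    \<Rightarrow> ('f, 'v) term \<times> ('l, 'f, 'v) trace \<Rightarrow> bool"
  for R :: "('l, 'f, 'v) lctrs" where
  "(\<beta>, \<rho>) \<in> R \<Longrightarrow> gc_subst R (rule_vars \<rho>) \<sigma> \<Longrightarrow> safe_trace R \<pi>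
    \<Longrightarrow> length \<pi>s = length (conds \<rho>)
    \<Longrightarrow> (\<forall>i < length (conds \<rho>).
          (rstep R)\<^sup>*\<^sup>* (subst \<sigma> (fst (conds \<rho> ! i)), []) (subst \<sigma> (snd (conds \<rho> ! i)), \<pi>s ! i))
    \<Longrightarrow> rstep R (subst \<sigma> (lhs \<rho>), \<pi>)
               (subst \<sigma> (rhs \<rho>), TT \<beta> (restr \<sigma> (Vb \<rho>)) \<pi>s # \<pi>)"

text \<open>Symbols of the injectivized system: original symbols, the fresh pair constructor,
  a fresh constructor per rule label, and a fresh defined symbol f^i per symbol f.
  Variables: original variables (Inl) and fresh variables w_i (Inr i).\<close>
datatype ('f, 'l) isym = Orig 'f | PairS | LabS 'l | InjS 'f

type_synonym ('f, 'l, 'v) iterm = "(('f, 'l) isym, 'v + nat) term"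

definition emb :: "('f, 'v) term \<Rightarrow> ('f, 'l, 'v) iterm" where
  "emb = map_term Orig Inl"

fun inj_term :: "('f, 'v) term \<Rightarrow> ('f, 'l, 'v) iterm" where
  "inj_term (Fun f us) = Fun (InjS f) (map emb us)"
| "inj_term (Var x) = Var (Inl x)"

definition pair :: "('f, 'l, 'v) iterm \<Rightarrow> ('f, 'l, 'v) iterm \<Rightarrow> ('f, 'l, 'v) iterm" where
  "pair a b = Fun PairS [a, b]"

definition inj_rule :: "'l \<times> ('f, 'v::linorder) crule \<Rightarrow> 'l \<times> (('f, 'l) isym, 'v + nat) crule" where
  "inj_rule = (\<lambda>(\<beta>, \<rho>).
     (\<beta>, (inj_term (lhs \<rho>),
          pair (emb (rhs \<rho>))
               (Fun (LabS \<beta>) (map (\<lambda>y. Var (Inl y)) (sorted_list_of_set (Vb \<rho>))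
                               @ map (\<lambda>i. Var (Inr i)) [0..<length (conds \<rho>)])),
          map (\<lambda>i. (inj_term (fst (conds \<rho> ! i)), pair (emb (snd (conds \<rho> ! i))) (Var (Inr i))))
              [0..<length (conds \<rho>)])))"

definition injz :: "('l, 'f, 'v::linorder) lctrs \<Rightarrow> ('l, ('f, 'l) isym, 'v + nat) lctrs" where
  "injz R = inj_rule ` R"

text \<open>The translation of trace terms; it is defined (Some) exactly when every sub-trace
  is a single trace term (trace terms being identified with singleton traces).\<close>
function hat :: "('l, 'f, 'v::linorder) trace_term \<Rightarrow> ('f, 'l, 'v) iterm option" where
  "hat (TT \<beta> \<sigma> \<pi>s) =
     (let hs = map (\<lambda>\<pi>. case \<pi> of [p] \<Rightarrow> hat p | _ \<Rightarrow> None) \<pi>s in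
      if None \<in> set hs then None
      else Some (Fun (LabS \<beta>) (map (\<lambda>y. emb (the (\<sigma> y))) (sorted_list_of_set (dom \<sigma>))
                                @ map the hs)))"
  by pat_completeness auto
termination
  apply (relation "measure size")
   apply simp_all
  apply (drule size_list_estimation'[where f = "size_list size", OF _ order_refl])
  apply simp
  done

end

theory Submission
  imports Defs
begin

text \<open>In a pcDCTRS every
  condition instantiates to a pair (basic term, constructor term); since a constructor step
  never starts in a constructor term and from a basic term always ends in one, each condition
  is discharged by exactly one step, in \<open>R\<close> as well as in \<open>I(R)\<close>.

  Forward, the translated sub-traces of the conditions are the values of the fresh variables
  \<open>w\<^sub>i\<close>, and the injectivized rule pairs \<open>r\<sigma>\<close> with the translation of the new trace
  term. Backward, matching \<open>l\<^sup>i\<close> against \<open>s\<^sup>i\<close> binds the variables of \<open>l\<close> to embedded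
  constructor terms, and then, condition by condition, the reflected condition step binds the
  variables of its right-hand side; the trace is recovered from its translation because safety
  fixes its domain to \<open>V\<^sub>\<beta>\<close>.\<close>

lemma emb_simps [simp]:
  "emb (Var x) = Var (Inl x)"
  "emb (Fun f ts) = Fun (Orig f) (map emb ts)"
  by (simp_all add: emb_def)

lemma inj_emb: "inj emb"
  unfolding emb_def by (rule term.inj_map) (auto intro: injI)

lemma emb_eq_iff [simp]: "emb a = emb b \<longleftrightarrow> a = b"
  by (rule inj_eq[OF inj_emb])

lemma finite_vars [simp]: "finite (vars t)"
  by (induction t) auto

lemma vars_emb [simp]: "vars (emb t) = Inl ` vars t"
  by (induction t) auto

lemma ground_emb [simp]: "ground (emb t) \<longleftrightarrow> ground t"
  by (simp add: ground_def)

lemma funs_emb: "funs (emb t) = Orig ` funs t"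
  by (induction t) auto

lemma vars_subst: "vars (subst \<sigma> t) = (\<Union>x \<in> vars t. vars (\<sigma> x))"
  by (induction t) auto

lemma funs_subst: "funs (subst \<sigma> t) = funs t \<union> (\<Union>x \<in> vars t. funs (\<sigma> x))"
  by (induction t) auto

lemma ground_Fun [simp]: "ground (Fun f ts) \<longleftrightarrow> (\<forall>t \<in> set ts. ground t)"
  by (auto simp: ground_def)

lemma subterms_refl [simp]: "t \<in> subterms t"
  by (cases t) auto

lemma subterm_vars: "u \<in> subterms t \<Longrightarrow> vars u \<subseteq> vars t"
  by (induction t) auto

lemma subterm_funs: "u \<in> subterms t \<Longrightarrow> funs u \<subseteq> funs t"
  by (induction t) fastforce+

lemma constr_term_subterm: "constr_term R t \<Longrightarrow> u \<in> subterms t \<Longrightarrow> constr_term R u"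
  unfolding constr_term_def using subterm_funs by blast

lemma subst_emb:
  "(\<And>x. x \<in> vars t \<Longrightarrow> \<sigma>' (Inl x) = emb (\<sigma> x)) \<Longrightarrow> subst \<sigma>' (emb t) = emb (subst \<sigma> t)"
  by (induction t) auto

lemma subst_inj_term:
  "(\<And>x. x \<in> vars (Fun f ts) \<Longrightarrow> \<sigma>' (Inl x) = emb (\<sigma> x))
   \<Longrightarrow> subst \<sigma>' (inj_term (Fun f ts)) = inj_term (subst \<sigma> (Fun f ts))"
  by (auto intro: subst_emb)

lemma inj_term_Fun_eq_iff: "inj_term (Fun f ts) = inj_term s \<longleftrightarrow> s = Fun f ts"
  by (cases s) (auto simp: inj_map_eq_map[OF inj_emb])

lemma subst_emb_eq_emb:
  "subst \<sigma> (emb l) = emb u \<Longrightarrow> x \<in> vars l \<Longrightarrow> \<exists>v \<in> subterms u. \<sigma> (Inl x) = emb v"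
proof (induction l arbitrary: u)
  case (Fun f ls)
  then obtain us where u: "u = Fun f us" and args: "map (subst \<sigma> \<circ> emb) ls = map emb us"
    by (cases u) auto
  obtain l where l: "l \<in> set ls" "x \<in> vars l"
    using Fun.prems(2) by auto
  then have "subst \<sigma> (emb l) \<in> emb ` set us"
    using args by (metis comp_apply image_eqI list.set_map)
  then obtain u' where "u' \<in> set us" "subst \<sigma> (emb l) = emb u'"
    by blast
  then show ?case
    using Fun.IH[OF l(1) _ l(2)] u by fastforce
qed auto

lemma subst_inj_term_eq_inj_term:
  assumes "subst \<sigma> (inj_term (Fun f ls)) = inj_term s" and "x \<in> vars (Fun f ls)"
  shows "\<exists>u \<in> psubterms s. \<sigma> (Inl x) = emb u"
proof -
  obtain us where s: "s = Fun f us" and args: "map (subst \<sigma> \<circ> emb) ls = map emb us"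
    using assms(1) by (cases s) auto
  obtain l where l: "l \<in> set ls" "x \<in> vars l"
    using assms(2) by auto
  then obtain u' where "u' \<in> set us" "subst \<sigma> (emb l) = emb u'"
    using args by (metis comp_apply imageE image_eqI list.set_map)
  with subst_emb_eq_emb[OF _ l(2)] s show ?thesis
    by fastforce
qed

lemma dctrsD:
  assumes "is_dctrs R" and "(\<beta>, \<rho>) \<in> R"
  shows dctrs_lhs_Fun: "\<exists>f ts. lhs \<rho> = Fun f ts"
    and dctrs_rhs_vars: "vars (rhs \<rho>) \<subseteq> vars (lhs \<rho>) \<union> cvars (conds \<rho>)"
    and dctrs_cond_vars: "i < length (conds \<rho>) \<Longrightarrow>
      vars (fst (conds \<rho> ! i)) \<subseteq> vars (lhs \<rho>) \<union> (\<Union>j<i. vars (snd (conds \<rho> ! j)))"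
  using assms unfolding is_dctrs_def by fastforce+

lemma dctrs_label_unique: "is_dctrs R \<Longrightarrow> (\<beta>, \<rho>) \<in> R \<Longrightarrow> (\<beta>, \<rho>') \<in> R \<Longrightarrow> \<rho> = \<rho>'"
  unfolding is_dctrs_def by fast

lemma is_dctrsI:
  assumes "finite R"
    and "\<And>\<beta> \<rho> \<rho>'. (\<beta>, \<rho>) \<in> R \<Longrightarrow> (\<beta>, \<rho>') \<in> R \<Longrightarrow> \<rho> = \<rho>'"
    and "\<And>\<beta> \<rho>. (\<beta>, \<rho>) \<in> R \<Longrightarrow> \<exists>f ts. lhs \<rho> = Fun f ts"
    and "\<And>\<beta> \<rho>. (\<beta>, \<rho>) \<in> R \<Longrightarrow> vars (rhs \<rho>) \<subseteq> vars (lhs \<rho>) \<union> cvars (conds \<rho>)"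
    and "\<And>\<beta> \<rho> i. (\<beta>, \<rho>) \<in> R \<Longrightarrow> i < length (conds \<rho>) \<Longrightarrow>
      vars (fst (conds \<rho> ! i)) \<subseteq> vars (lhs \<rho>) \<union> (\<Union>j<i. vars (snd (conds \<rho> ! j)))"
  shows "is_dctrs R"
  unfolding is_dctrs_def
proof (intro conjI ballI assms(1))
  fix x assume "x \<in> R"
  moreover obtain \<beta> \<rho> where "x = (\<beta>, \<rho>)"
    by (meson surj_pair)
  ultimately show "case x of (\<beta>, \<rho>) \<Rightarrow> \<forall>(\<beta>', \<rho>') \<in> R. \<beta> = \<beta>' \<longrightarrow> \<rho> = \<rho>'"
    using assms(2)[of \<beta> \<rho>] by (fastforce simp: split_beta)
next
  fix x assume "x \<in> R"
  then show "case x of (\<beta>, \<rho>) \<Rightarrow> (\<exists>f ts. lhs \<rho> = Fun f ts)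
      \<and> vars (rhs \<rho>) \<subseteq> vars (lhs \<rho>) \<union> cvars (conds \<rho>)
      \<and> (\<forall>i < length (conds \<rho>).
           vars (fst (conds \<rho> ! i)) \<subseteq> vars (lhs \<rho>) \<union> (\<Union>j<i. vars (snd (conds \<rho> ! j))))"
    using assms(3-5) by (cases x) simp
qed

lemma pcdctrs_dctrs: "is_pcdctrs R \<Longrightarrow> is_dctrs R"
  by (simp add: is_pcdctrs_def)

lemma pcdctrsD:
  assumes "is_pcdctrs R" and "(\<beta>, \<rho>) \<in> R"
  shows pcdctrs_lhs: "basic R (lhs \<rho>)"
    and pcdctrs_rhs: "constr_term R (rhs \<rho>)"
    and pcdctrs_cond_source: "i < length (conds \<rho>) \<Longrightarrow> basic R (fst (conds \<rho> ! i))"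
    and pcdctrs_cond_target: "i < length (conds \<rho>) \<Longrightarrow> constr_term R (snd (conds \<rho> ! i))"
proof -
  have rule: "basic R (lhs \<rho>) \<and> constr_term R (rhs \<rho>)
      \<and> (\<forall>(s, t) \<in> set (conds \<rho>). basic R s \<and> constr_term R t)"
    using bspec[OF conjunct2[OF assms(1)[unfolded is_pcdctrs_def]] assms(2)] by simp
  show "basic R (lhs \<rho>)" "constr_term R (rhs \<rho>)"
    using rule by simp_all
  assume "i < length (conds \<rho>)"
  then have "conds \<rho> ! i \<in> set (conds \<rho>)"
    by (rule nth_mem)
  then show "basic R (fst (conds \<rho> ! i))" "constr_term R (snd (conds \<rho> ! i))"
    using rule by (auto simp: split_beta)
qed

lemma is_pcdctrsI:
  assumes "is_dctrs R"
    and "\<And>\<beta> \<rho>. (\<beta>, \<rho>) \<in> R \<Longrightarrow> basic R (lhs \<rho>) \<and> constr_term R (rhs \<rho>)"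
    and "\<And>\<beta> \<rho> s t. (\<beta>, \<rho>) \<in> R \<Longrightarrow> (s, t) \<in> set (conds \<rho>) \<Longrightarrow> basic R s \<and> constr_term R t"
  shows "is_pcdctrs R"
  unfolding is_pcdctrs_def
proof (intro conjI ballI assms(1))
  fix x assume "x \<in> R"
  then show "case x of (\<beta>, \<rho>) \<Rightarrow> basic R (lhs \<rho>) \<and> constr_term R (rhs \<rho>)
      \<and> (\<forall>(s, t) \<in> set (conds \<rho>). basic R s \<and> constr_term R t)"
    using assms(2,3) by (cases x) fastforce
qed

lemma cvars_nth: "cvars cs = (\<Union>i<length cs. vars (fst (cs ! i)) \<union> vars (snd (cs ! i)))"
  unfolding cvars_def set_conv_nth by (auto simp: split_beta)

lemma rule_vars_lhs: "vars (lhs \<rho>) \<subseteq> rule_vars \<rho>"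
  and rule_vars_rhs: "vars (rhs \<rho>) \<subseteq> rule_vars \<rho>"
  and rule_vars_cond: "i < length (conds \<rho>) \<Longrightarrow>
    vars (fst (conds \<rho> ! i)) \<union> vars (snd (conds \<rho> ! i)) \<subseteq> rule_vars \<rho>"
  unfolding rule_vars_def cvars_nth by blast+

lemma Vb_subset_rule_vars: "Vb \<rho> \<subseteq> rule_vars \<rho>"
  unfolding Vb_def rule_vars_def cvars_nth by auto

lemma finite_rule_vars [simp]: "finite (rule_vars \<rho>)"
  by (simp add: rule_vars_def cvars_def split_beta)

lemma finite_Vb [simp]: "finite (Vb \<rho>)"
  using Vb_subset_rule_vars finite_rule_vars by (rule finite_subset)

lemma dctrs_rule_var_cases:
  assumes "is_dctrs R" and "(\<beta>, \<rho>) \<in> R" and "x \<in> rule_vars \<rho>"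
  obtains "x \<in> vars (lhs \<rho>)" | i where "i < length (conds \<rho>)" "x \<in> vars (snd (conds \<rho> ! i))"
proof -
  have "cvars (conds \<rho>) \<subseteq> vars (lhs \<rho>) \<union> (\<Union>i<length (conds \<rho>). vars (snd (conds \<rho> ! i)))"
  proof
    fix y assume "y \<in> cvars (conds \<rho>)"
    then obtain i where i: "i < length (conds \<rho>)"
      and y: "y \<in> vars (fst (conds \<rho> ! i)) \<union> vars (snd (conds \<rho> ! i))"
      by (auto simp: cvars_nth)
    then show "y \<in> vars (lhs \<rho>) \<union> (\<Union>i<length (conds \<rho>). vars (snd (conds \<rho> ! i)))"
      using dctrs_cond_vars[OF assms(1,2) i] by auto
  qed
  then have "x \<in> vars (lhs \<rho>) \<union> (\<Union>i<length (conds \<rho>). vars (snd (conds \<rho> ! i)))"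
    using assms(3) dctrs_rhs_vars[OF assms(1,2)] unfolding rule_vars_def by blast
  then show thesis
    using that by blast
qed

lemma constr_subst:
  assumes "gc_subst R X \<sigma>" and "vars t \<subseteq> X" and "constr_term R t"
  shows "ground (subst \<sigma> t) \<and> constr_term R (subst \<sigma> t)"
  using assms unfolding gc_subst_def constr_term_def ground_def
  by (auto simp: vars_subst funs_subst)

lemma basic_subst:
  assumes "gc_subst R X \<sigma>" and "vars s \<subseteq> X" and "basic R s"
  shows "ground (subst \<sigma> s) \<and> basic R (subst \<sigma> s)"
proof -
  obtain f us where s: "s = Fun f us" "f \<in> defs R" "\<forall>u \<in> set us. constr_term R u"
    using assms(3) unfolding basic_def by blast
  have "ground (subst \<sigma> u) \<and> constr_term R (subst \<sigma> u)" if "u \<in> set us" for u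
    using constr_subst[OF assms(1)] assms(2) s that by auto
  then show ?thesis
    using s unfolding basic_def by auto
qed

section \<open>The injectivized system\<close>

definition irule :: "'l \<Rightarrow> ('f, 'v::linorder) crule \<Rightarrow> (('f, 'l) isym, 'v + nat) crule" where
  "irule \<beta> \<rho> = snd (inj_rule (\<beta>, \<rho>))"

lemma inj_rule_eq: "inj_rule (\<beta>, \<rho>) = (\<beta>, irule \<beta> \<rho>)"
  by (simp add: irule_def inj_rule_def)

lemma mem_injz: "(\<beta>, \<rho>') \<in> injz R \<longleftrightarrow> (\<exists>\<rho>. (\<beta>, \<rho>) \<in> R \<and> \<rho>' = irule \<beta> \<rho>)"
  unfolding injz_def by (force simp: inj_rule_eq)

lemma irule_in_injz: "(\<beta>, \<rho>) \<in> R \<Longrightarrow> (\<beta>, irule \<beta> \<rho>) \<in> injz R"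
  unfolding injz_def by (erule rev_image_eqI) (simp add: inj_rule_eq)

lemma irule_simps [simp]:
  "lhs (irule \<beta> \<rho>) = inj_term (lhs \<rho>)"
  "rhs (irule \<beta> \<rho>) = pair (emb (rhs \<rho>))
     (Fun (LabS \<beta>) (map (\<lambda>y. Var (Inl y)) (sorted_list_of_set (Vb \<rho>))
                     @ map (\<lambda>i. Var (Inr i)) [0..<length (conds \<rho>)]))"
  "length (conds (irule \<beta> \<rho>)) = length (conds \<rho>)"
  "i < length (conds \<rho>) \<Longrightarrow> conds (irule \<beta> \<rho>) ! i
     = (inj_term (fst (conds \<rho> ! i)), pair (emb (snd (conds \<rho> ! i))) (Var (Inr i)))"
  by (simp_all add: irule_def inj_rule_def lhs_def rhs_def conds_def)

lemma vars_inj_term [simp]: "vars (inj_term l) = Inl ` vars l"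
  by (cases l) auto

lemma pair_simps [simp]:
  "vars (pair a b) = vars a \<union> vars b"
  "funs (pair a b) = insert PairS (funs a \<union> funs b)"
  "subst \<sigma> (pair a b) = pair (subst \<sigma> a) (subst \<sigma> b)"
  "pair a b = pair c d \<longleftrightarrow> a = c \<and> b = d"
  by (auto simp: pair_def)

lemma vars_rhs_irule:
  "vars (rhs (irule \<beta> \<rho>)) = Inl ` vars (rhs \<rho>) \<union> Inl ` Vb \<rho> \<union> Inr ` {..<length (conds \<rho>)}"
  by (auto simp: atLeast0LessThan)

lemma cvars_conds_irule:
  "cvars (conds (irule \<beta> \<rho>)) = Inl ` cvars (conds \<rho>) \<union> Inr ` {..<length (conds \<rho>)}"
  by (auto simp: cvars_nth)

lemma rule_vars_irule:
  "rule_vars (irule \<beta> \<rho>) = Inl ` rule_vars \<rho> \<union> Inr ` {..<length (conds \<rho>)}"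
  using Vb_subset_rule_vars[of \<rho>]
  unfolding rule_vars_def[of "irule \<beta> \<rho>"] vars_rhs_irule cvars_conds_irule
  by (auto simp: rule_vars_def)

lemma defs_iff: "f \<in> defs R \<longleftrightarrow> (\<exists>\<beta> \<rho> ts. (\<beta>, \<rho>) \<in> R \<and> lhs \<rho> = Fun f ts)"
  unfolding defs_def by blast

lemma constr_term_Var [simp]: "constr_term R (Var x)"
  by (simp add: constr_term_def)

lemma defs_injz:
  fixes R :: "('l, 'f, 'v::linorder) lctrs"
  assumes "is_dctrs R"
  shows "defs (injz R) = InjS ` defs R"
proof (intro set_eqI iffI)
  fix g :: "('f, 'l) isym" assume "g \<in> defs (injz R)"
  then obtain \<beta> \<rho> ts where \<rho>: "(\<beta>, \<rho>) \<in> R" and lhs: "inj_term (lhs \<rho>) = Fun g ts"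
    unfolding defs_iff mem_injz by auto
  obtain f us where f: "lhs \<rho> = Fun f us"
    using dctrs_lhs_Fun[OF assms \<rho>] by blast
  have "f \<in> defs R"
    using \<rho> f unfolding defs_iff by blast
  moreover have "g = InjS f"
    using lhs f by simp
  ultimately show "g \<in> InjS ` defs R"
    by blast
next
  fix g :: "('f, 'l) isym" assume "g \<in> InjS ` defs R"
  then obtain f where "g = InjS f" "f \<in> defs R"
    by blast
  then obtain \<beta> \<rho> ts where "g = InjS f" "(\<beta>, \<rho>) \<in> R" "lhs \<rho> = Fun f ts"
    unfolding defs_iff by blast
  then have "(\<beta>, irule \<beta> \<rho>) \<in> injz R" "lhs (irule \<beta> \<rho>) = Fun g (map emb ts)"
    by (simp_all add: irule_in_injz)
  then show "g \<in> defs (injz R)"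
    unfolding defs_iff by blast
qed

lemma constr_injz_iff:
  "is_dctrs R \<Longrightarrow> constr_term (injz R) t \<longleftrightarrow> (\<forall>f \<in> defs R. InjS f \<notin> funs t)"
  unfolding constr_term_def by (auto simp: defs_injz)

lemma constr_injz_emb: "is_dctrs R \<Longrightarrow> constr_term (injz R) (emb t)"
  by (auto simp: constr_injz_iff funs_emb)

lemma constr_injz_pair:
  "is_dctrs R \<Longrightarrow> constr_term (injz R) (pair a b) \<longleftrightarrow> constr_term (injz R) a \<and> constr_term (injz R) b"
  by (auto simp: constr_injz_iff)

lemma constr_injz_label:
  "is_dctrs R \<Longrightarrow> constr_term (injz R) (Fun (LabS \<beta>) ts) \<longleftrightarrow> (\<forall>t \<in> set ts. constr_term (injz R) t)"
  by (auto simp: constr_injz_iff)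

lemma basic_injz_inj_term: "is_dctrs R \<Longrightarrow> basic R l \<Longrightarrow> basic (injz R) (inj_term l)"
  unfolding basic_def by (auto simp: defs_injz constr_injz_emb)

lemma psubterms_inj_term_constr:
  "is_dctrs R \<Longrightarrow> u \<in> psubterms (inj_term s) \<Longrightarrow> constr_term (injz R) u"
  by (cases s) (auto intro: constr_term_subterm constr_injz_emb)

lemma dctrs_rule_vars:
  assumes "is_dctrs R" and "(\<beta>, \<rho>) \<in> R"
  shows "rule_vars \<rho> = vars (lhs \<rho>) \<union> cvars (conds \<rho>)"
  using dctrs_rhs_vars[OF assms] unfolding rule_vars_def by blast

lemma injz_dctrs:
  assumes "is_dctrs R"
  shows "is_dctrs (injz R)"
proof (rule is_dctrsI)
  show "finite (injz R)"
    using assms unfolding is_dctrs_def injz_def by simp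
  show "\<rho>1 = \<rho>2" if "(\<beta>, \<rho>1) \<in> injz R" "(\<beta>, \<rho>2) \<in> injz R" for \<beta> \<rho>1 \<rho>2
    using that dctrs_label_unique[OF assms] unfolding mem_injz by blast
  fix \<beta> \<rho>' assume "(\<beta>, \<rho>') \<in> injz R"
  then obtain \<rho> where \<rho>: "(\<beta>, \<rho>) \<in> R" and \<rho>': "\<rho>' = irule \<beta> \<rho>"
    unfolding mem_injz by blast
  show "\<exists>f ts. lhs \<rho>' = Fun f ts"
    using dctrs_lhs_Fun[OF assms \<rho>] \<rho>' by auto
  show "vars (rhs \<rho>') \<subseteq> vars (lhs \<rho>') \<union> cvars (conds \<rho>')"
    using Vb_subset_rule_vars[of \<rho>] rule_vars_rhs[of \<rho>] dctrs_rule_vars[OF assms \<rho>]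
    unfolding \<rho>' vars_rhs_irule cvars_conds_irule by auto
  fix i assume "i < length (conds \<rho>')"
  then have i: "i < length (conds \<rho>)"
    by (simp add: \<rho>')
  show "vars (fst (conds \<rho>' ! i)) \<subseteq> vars (lhs \<rho>') \<union> (\<Union>j<i. vars (snd (conds \<rho>' ! j)))"
    using dctrs_cond_vars[OF assms \<rho> i] i unfolding \<rho>' by auto
qed

lemma injz_pcdctrs:
  assumes "is_pcdctrs R"
  shows "is_pcdctrs (injz R)"
proof (rule is_pcdctrsI)
  have D: "is_dctrs R"
    using assms by (rule pcdctrs_dctrs)
  then show "is_dctrs (injz R)"
    by (rule injz_dctrs)
  fix \<beta> \<rho>' assume "(\<beta>, \<rho>') \<in> injz R"
  then obtain \<rho> where \<rho>: "(\<beta>, \<rho>) \<in> R" and \<rho>': "\<rho>' = irule \<beta> \<rho>"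
    unfolding mem_injz by blast
  show "basic (injz R) (lhs \<rho>') \<and> constr_term (injz R) (rhs \<rho>')"
    using basic_injz_inj_term[OF D pcdctrs_lhs[OF assms \<rho>]] unfolding \<rho>'
    by (auto simp: constr_injz_pair[OF D] constr_injz_label[OF D] constr_injz_emb[OF D])
  fix s t assume "(s, t) \<in> set (conds \<rho>')"
  then obtain i where i: "i < length (conds \<rho>)" and "(s, t) = conds \<rho>' ! i"
    unfolding \<rho>' by (auto simp: in_set_conv_nth)
  then have "s = inj_term (fst (conds \<rho> ! i))" "t = pair (emb (snd (conds \<rho> ! i))) (Var (Inr i))"
    by (simp_all add: \<rho>')
  then show "basic (injz R) s \<and> constr_term (injz R) t"
    using basic_injz_inj_term[OF D pcdctrs_cond_source[OF assms \<rho> i]]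
    by (simp add: constr_injz_pair[OF D] constr_injz_emb[OF D])
qed

section \<open>Constructor terms are normal forms\<close>

lemma basic_not_constr: "basic R s \<Longrightarrow> \<not> constr_term R s"
  unfolding basic_def constr_term_def by auto

lemma subst_lhs_not_constr:
  assumes "is_dctrs R" and "(\<beta>, \<rho>) \<in> R"
  shows "\<not> constr_term R (subst \<sigma> (lhs \<rho>))"
proof -
  obtain f ts where "lhs \<rho> = Fun f ts"
    using dctrs_lhs_Fun[OF assms] by blast
  moreover have "f \<in> defs R"
    using assms(2) calculation unfolding defs_iff by blast
  ultimately show ?thesis
    by (simp add: constr_term_def)
qed

lemma lhs_match_not_constr:
  assumes "is_dctrs R" and "lhs_match R u"
  shows "\<not> constr_term R u"
proof -
  obtain x \<sigma> where "x \<in> R" "u = subst \<sigma> (lhs (snd x))"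
    using assms(2) unfolding lhs_match_def by (auto simp: split_beta)
  then show ?thesis
    using subst_lhs_not_constr[OF assms(1), of "fst x" "snd x"] by simp
qed

lemma cstep_source_not_constr:
  assumes "is_dctrs R"
  shows "cstep R u v \<Longrightarrow> \<not> constr_term R u"
proof (induction rule: cstep.induct)
  case (top \<beta> \<rho> \<sigma>)
  then show ?case
    using subst_lhs_not_constr[OF assms] by blast
next
  case (ctxt u u' ss ts f)
  then show ?case
    by (auto simp: constr_term_def)
qed

lemma cstep_basic_constr:
  assumes "is_pcdctrs R" and "cstep R u v" and "basic R u"
  shows "constr_term R v"
  using assms(2,3)
proof (cases rule: cstep.cases)
  case (top \<beta> \<rho> \<sigma>)
  then show ?thesis
    using constr_subst[OF top(4) rule_vars_rhs pcdctrs_rhs[OF assms(1) top(3)]] by simp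
next
  case (ctxt u0 u0' ss ts f)
  have "\<forall>a \<in> set (ss @ u0 # ts). constr_term R a"
    using assms(3) unfolding ctxt(1) basic_def by auto
  then show ?thesis
    using cstep_source_not_constr[OF pcdctrs_dctrs[OF assms(1)] \<open>cstep R u0 u0'\<close>] by simp
qed

lemma rstep_source_not_constr:
  assumes "is_dctrs R"
  shows "rstep R a b \<Longrightarrow> \<not> constr_term R (fst a)"
  by (induction rule: rstep.induct) (simp add: subst_lhs_not_constr[OF assms])

lemma rstep_target_constr:
  assumes "is_pcdctrs R"
  shows "rstep R a b \<Longrightarrow> constr_term R (fst b)"
  by (induction rule: rstep.induct) (simp add: constr_subst rule_vars_rhs pcdctrs_rhs[OF assms])

text \<open>Read \<open>S\<close> as ``not a normal form''.\<close>
lemma rtranclp_single_step: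
  assumes "Q\<^sup>*\<^sup>* a b" and "S a" and "\<not> S b"
    and "\<And>x y. Q x y \<Longrightarrow> S x" and "\<And>y. Q a y \<Longrightarrow> \<not> S y"
  shows "Q a b"
  using assms(1)
proof (cases rule: converse_rtranclpE)
  case base
  then show ?thesis
    using assms(2,3) by simp
next
  case (step c)
  have "\<not> S c"
    using assms(5)[OF step(1)] .
  from step(2) have "c = b"
    by (cases rule: converse_rtranclpE) (use \<open>\<not> S c\<close> assms(4) in blast)+
  then show ?thesis
    using step(1) by simp
qed

lemma pcdctrs_cond_single_step:
  assumes pc: "is_pcdctrs R" and \<rho>: "(\<beta>, \<rho>) \<in> R" and \<sigma>: "gc_subst R (rule_vars \<rho>) \<sigma>"
    and i: "i < length (conds \<rho>)"
    and steps: "Q\<^sup>*\<^sup>* (subst \<sigma> (fst (conds \<rho> ! i))) (subst \<sigma> (snd (conds \<rho> ! i)))"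
    and Q: "\<And>x y. Q x y \<Longrightarrow> cstep R x y"
  shows "Q (subst \<sigma> (fst (conds \<rho> ! i))) (subst \<sigma> (snd (conds \<rho> ! i)))"
proof (rule rtranclp_single_step[OF steps, where S = "\<lambda>u. \<not> constr_term R u"])
  have basic: "basic R (subst \<sigma> (fst (conds \<rho> ! i)))"
    using basic_subst[OF \<sigma> _ pcdctrs_cond_source[OF pc \<rho> i]] rule_vars_cond[OF i] by blast
  then show "\<not> constr_term R (subst \<sigma> (fst (conds \<rho> ! i)))"
    by (rule basic_not_constr)
  show "\<not> \<not> constr_term R (subst \<sigma> (snd (conds \<rho> ! i)))"
    using constr_subst[OF \<sigma> _ pcdctrs_cond_target[OF pc \<rho> i]] rule_vars_cond[OF i] by blast
  show "\<not> constr_term R x" if "Q x y" for x y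
    using cstep_source_not_constr[OF pcdctrs_dctrs[OF pc] Q[OF that]] .
  show "\<not> \<not> constr_term R y" if "Q (subst \<sigma> (fst (conds \<rho> ! i))) y" for y
    using cstep_basic_constr[OF pc Q[OF that] basic] by simp
qed

text \<open>\<open>label_term \<beta> \<rho> \<sigma> hs\<close> is \<open>\<beta>(\<sigma> y\<^sub>1, \<dots>, \<sigma> y\<^sub>m, hs)\<close>, the translation of a trace term
  \<open>\<beta>(\<sigma>|\<^sub>V\<^sub>\<beta>, \<pi>\<^sub>1, \<dots>, \<pi>\<^sub>n)\<close> whose sub-traces translate to \<open>hs\<close>.\<close>
definition label_term ::
  "'l \<Rightarrow> ('f, 'v::linorder) crule \<Rightarrow> ('v \<Rightarrow> ('f, 'v) term) \<Rightarrow> ('f, 'l, 'v) iterm list \<Rightarrow> ('f, 'l, 'v) iterm"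
  where "label_term \<beta> \<rho> \<sigma> hs = Fun (LabS \<beta>) (map (\<lambda>y. emb (\<sigma> y)) (sorted_list_of_set (Vb \<rho>)) @ hs)"

lemma subst_rhs_irule:
  assumes "\<And>x. x \<in> rule_vars \<rho> \<Longrightarrow> \<sigma>' (Inl x) = emb (\<sigma> x)"
  shows "subst \<sigma>' (rhs (irule \<beta> \<rho>))
    = pair (emb (subst \<sigma> (rhs \<rho>))) (label_term \<beta> \<rho> \<sigma> (map (\<lambda>i. \<sigma>' (Inr i)) [0..<length (conds \<rho>)]))"
proof -
  have "subst \<sigma>' (emb (rhs \<rho>)) = emb (subst \<sigma> (rhs \<rho>))"
    by (rule subst_emb) (simp add: assms subsetD[OF rule_vars_rhs])
  moreover have "map (\<lambda>y. \<sigma>' (Inl y)) (sorted_list_of_set (Vb \<rho>)) = map (\<lambda>y. emb (\<sigma> y)) (sorted_list_of_set (Vb \<rho>))"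
    by (rule map_cong[OF refl]) (simp add: assms subsetD[OF Vb_subset_rule_vars])
  ultimately show ?thesis
    by (simp add: label_term_def comp_def)
qed

lemma dom_restr [simp]: "dom (restr \<sigma> X) = X"
  by (auto simp: restr_def split: if_splits)

lemma restr_apply [simp]: "y \<in> X \<Longrightarrow> restr \<sigma> X y = Some (\<sigma> y)"
  by (simp add: restr_def)

lemma hat_TT_eq_Some:
  "hat (TT \<beta> \<tau> \<pi>s) = Some h \<longleftrightarrow>
    (\<exists>hs. h = Fun (LabS \<beta>) (map (\<lambda>y. emb (the (\<tau> y))) (sorted_list_of_set (dom \<tau>)) @ hs)
       \<and> length hs = length \<pi>s \<and> (\<forall>i < length \<pi>s. \<exists>p. \<pi>s ! i = [p] \<and> hat p = Some (hs ! i)))"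
  (is "_ \<longleftrightarrow> (\<exists>hs. h = ?lab hs \<and> ?sub hs)")
proof -
  define opts where "opts = map (\<lambda>\<pi>. case \<pi> of [p] \<Rightarrow> hat p | _ \<Rightarrow> None) \<pi>s"
  have hat_eq: "hat (TT \<beta> \<tau> \<pi>s) = (if None \<in> set opts then None else Some (?lab (map the opts)))"
    by (simp add: opts_def Let_def)
  have "?sub hs \<longleftrightarrow> opts = map Some hs" for hs
  proof
    assume "?sub hs"
    then show "opts = map Some hs"
      by (intro nth_equalityI) (auto simp: opts_def)
  next
    assume opts: "opts = map Some hs"
    have len: "length hs = length \<pi>s"
      using arg_cong[OF opts, of length] by (simp add: opts_def)
    have "\<exists>p. \<pi>s ! i = [p] \<and> hat p = Some (hs ! i)" if "i < length \<pi>s" for i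
      using that len arg_cong[OF opts, of "\<lambda>xs. xs ! i"] unfolding opts_def
      by (cases "\<pi>s ! i" rule: remdups_adj.cases) auto
    then show "?sub hs"
      using len by simp
  qed
  moreover have "None \<notin> set opts \<longleftrightarrow> opts = map Some (map the opts)"
    by (induction opts) auto
  ultimately show ?thesis
    unfolding hat_eq by auto
qed

lemma hat_TT_restr:
  assumes "length \<pi>s = length hs"
    and "\<And>i. i < length hs \<Longrightarrow> \<exists>p. \<pi>s ! i = [p] \<and> hat p = Some (hs ! i)"
  shows "hat (TT \<beta> (restr \<sigma> (Vb \<rho>)) \<pi>s) = Some (label_term \<beta> \<rho> \<sigma> hs)"
proof -
  have "map (\<lambda>y. emb (the (restr \<sigma> (Vb \<rho>) y))) (sorted_list_of_set (Vb \<rho>))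
      = map (\<lambda>y. emb (\<sigma> y)) (sorted_list_of_set (Vb \<rho>))"
    by (rule map_cong) simp_all
  then show ?thesis
    using assms unfolding hat_TT_eq_Some label_term_def by auto
qed

lemma hat_eq_label_termE:
  assumes "is_dctrs R" and "(\<beta>, \<rho>) \<in> R" and "safe_tt R \<pi>"
    and "hat \<pi> = Some (label_term \<beta> \<rho> \<sigma> hs)"
  obtains \<pi>s where "\<pi> = TT \<beta> (restr \<sigma> (Vb \<rho>)) \<pi>s"
    and "length \<pi>s = length (conds \<rho>)" and "length hs = length \<pi>s"
    and "\<And>i. i < length \<pi>s \<Longrightarrow> \<exists>p. \<pi>s ! i = [p] \<and> hat p = Some (hs ! i) \<and> safe_tt R p"
proof -
  obtain \<beta>' \<tau> \<pi>s where \<pi>: "\<pi> = TT \<beta>' \<tau> \<pi>s"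
    by (cases \<pi>)
  obtain hs' where lab: "label_term \<beta> \<rho> \<sigma> hs
      = Fun (LabS \<beta>') (map (\<lambda>y. emb (the (\<tau> y))) (sorted_list_of_set (dom \<tau>)) @ hs')"
    and len: "length hs' = length \<pi>s"
    and sub: "\<forall>i < length \<pi>s. \<exists>p. \<pi>s ! i = [p] \<and> hat p = Some (hs' ! i)"
    using assms(4) unfolding \<pi> hat_TT_eq_Some by blast
  obtain \<rho>' where \<rho>': "(\<beta>', \<rho>') \<in> R" "length \<pi>s = length (conds \<rho>')" "dom \<tau> = Vb \<rho>'"
    and safe: "\<forall>\<pi>' \<in> set \<pi>s. \<forall>p \<in> set \<pi>'. safe_tt R p"
    using assms(3) unfolding \<pi> by auto
  have "\<beta>' = \<beta>"
    using lab by (simp add: label_term_def)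
  then have "\<rho>' = \<rho>"
    using dctrs_label_unique[OF assms(1)] \<rho>'(1) assms(2) by blast
  then have vars: "map (\<lambda>y. emb (\<sigma> y)) (sorted_list_of_set (Vb \<rho>))
      = map (\<lambda>y. emb (the (\<tau> y))) (sorted_list_of_set (Vb \<rho>))" and "hs = hs'"
    using lab \<rho>'(3) by (simp_all add: label_term_def)
  have "\<tau> = restr \<sigma> (Vb \<rho>)"
  proof
    fix y
    show "\<tau> y = restr \<sigma> (Vb \<rho>) y"
    proof (cases "y \<in> Vb \<rho>")
      case True
      moreover obtain v where "\<tau> y = Some v"
        using True \<rho>'(3) \<open>\<rho>' = \<rho>\<close> by blast
      moreover have "\<sigma> y = the (\<tau> y)"
        using vars True by (simp add: map_eq_conv)
      ultimately show ?thesis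
        by simp
    next
      case False
      then show ?thesis
        using \<rho>'(3) \<open>\<rho>' = \<rho>\<close> by (auto simp: restr_def)
    qed
  qed
  then show thesis
    using that \<pi> \<rho>'(2) \<open>\<beta>' = \<beta>\<close> \<open>\<rho>' = \<rho>\<close> \<open>hs = hs'\<close> len sub safe
    by (metis nth_mem list.set_intros(1))
qed

lemma label_term_ground_constr:
  assumes "is_dctrs R" and "gc_subst R (rule_vars \<rho>) \<sigma>"
    and "\<And>h. h \<in> set hs \<Longrightarrow> ground h \<and> constr_term (injz R) h"
  shows "ground (label_term \<beta> \<rho> \<sigma> hs) \<and> constr_term (injz R) (label_term \<beta> \<rho> \<sigma> hs)"
  using assms Vb_subset_rule_vars[of \<rho>]
  by (auto simp: label_term_def constr_injz_label constr_injz_emb gc_subst_def ground_def)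

section \<open>Simulating reversible steps\<close>

lemma cstep_injz_rule:
  fixes R :: "('l, 'f, 'v::linorder) lctrs"
  assumes pc: "is_pcdctrs R" and \<rho>: "(\<beta>, \<rho>) \<in> R" and \<sigma>: "gc_subst R (rule_vars \<rho>) \<sigma>"
    and len: "length hs = length (conds \<rho>)"
    and hs: "\<And>i. i < length hs \<Longrightarrow> ground (hs ! i) \<and> constr_term (injz R) (hs ! i)
      \<and> cstep (injz R) (inj_term (subst \<sigma> (fst (conds \<rho> ! i))))
          (pair (emb (subst \<sigma> (snd (conds \<rho> ! i)))) (hs ! i))"
  shows "cstep (injz R) (inj_term (subst \<sigma> (lhs \<rho>)))
    (pair (emb (subst \<sigma> (rhs \<rho>))) (label_term \<beta> \<rho> \<sigma> hs))"
proof -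
  have D: "is_dctrs R"
    using pc by (rule pcdctrs_dctrs)
  define \<sigma>' :: "'v + nat \<Rightarrow> ('f, 'l, 'v) iterm" where "\<sigma>' = case_sum (\<lambda>x. emb (\<sigma> x)) (\<lambda>i. hs ! i)"
  have \<sigma>'_simps [simp]: "\<sigma>' (Inl x) = emb (\<sigma> x)" "\<sigma>' (Inr i) = hs ! i" for x i
    by (simp_all add: \<sigma>'_def)
  have subst_emb' [simp]: "subst \<sigma>' (emb t) = emb (subst \<sigma> t)" for t
    by (rule subst_emb) simp
  have inj: "subst \<sigma>' (inj_term l) = inj_term (subst \<sigma> l)" if "basic R l" for l
    using that unfolding basic_def by (auto simp: comp_def)
  have gc: "gc_subst (injz R) (rule_vars (irule \<beta> \<rho>)) \<sigma>'"
    using \<sigma> hs len unfolding gc_subst_def rule_vars_irule by (auto simp: constr_injz_emb[OF D])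
  have no_redex: "\<forall>u \<in> psubterms (subst \<sigma>' (lhs (irule \<beta> \<rho>))). \<not> lhs_match (injz R) u"
    unfolding irule_simps inj[OF pcdctrs_lhs[OF pc \<rho>]]
    using psubterms_inj_term_constr[OF D] lhs_match_not_constr[OF injz_dctrs[OF D]] by blast
  have conds: "\<forall>i < length (conds (irule \<beta> \<rho>)).
      (cstep (injz R))\<^sup>*\<^sup>* (subst \<sigma>' (fst (conds (irule \<beta> \<rho>) ! i))) (subst \<sigma>' (snd (conds (irule \<beta> \<rho>) ! i)))"
    using hs len by (simp add: inj pcdctrs_cond_source[OF pc \<rho>] r_into_rtranclp)
  have "map (\<lambda>i. \<sigma>' (Inr i)) [0..<length (conds \<rho>)] = hs"
    using len map_nth[of hs] by simp
  then have "subst \<sigma>' (rhs (irule \<beta> \<rho>)) = pair (emb (subst \<sigma> (rhs \<rho>))) (label_term \<beta> \<rho> \<sigma> hs)"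
    using subst_rhs_irule[of \<rho> \<sigma>' \<sigma> \<beta>] by simp
  then show ?thesis
    using cstep.top[OF irule_in_injz[OF \<rho>] gc no_redex conds]
    by (simp add: inj pcdctrs_lhs[OF pc \<rho>])
qed

lemma rstep_imp_cstep_injz:
  fixes R :: "('l, 'f, 'v::linorder) lctrs"
  assumes pc: "is_pcdctrs R"
  shows "rstep R a b \<Longrightarrow> \<exists>p h. snd b = p # snd a \<and> hat p = Some h
    \<and> ground h \<and> constr_term (injz R) h \<and> cstep (injz R) (inj_term (fst a)) (pair (emb (fst b)) h)"
proof (induction rule: rstep.induct)
  case (1 \<beta> \<rho> \<sigma> \<pi> \<pi>s)
  let ?n = "length (conds \<rho>)"
  let ?s = "\<lambda>i. subst \<sigma> (fst (conds \<rho> ! i))" and ?t = "\<lambda>i. subst \<sigma> (snd (conds \<rho> ! i))"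
  have D: "is_dctrs R"
    using pc by (rule pcdctrs_dctrs)
  have "\<exists>p h. \<pi>s ! i = [p] \<and> hat p = Some h \<and> ground h \<and> constr_term (injz R) h
      \<and> cstep (injz R) (inj_term (?s i)) (pair (emb (?t i)) h)" if i: "i < ?n" for i
  proof -
    have "\<not> constr_term R (?s i)"
      using basic_not_constr basic_subst[OF 1(2) _ pcdctrs_cond_source[OF pc 1(1) i]]
        rule_vars_cond[OF i] by blast
    moreover have "constr_term R (?t i)"
      using constr_subst[OF 1(2) _ pcdctrs_cond_target[OF pc 1(1) i]] rule_vars_cond[OF i] by blast
    ultimately show ?thesis
      using rtranclp_single_step[OF 1(5)[rule_format, OF i], where S = "\<lambda>x. \<not> constr_term R (fst x)"]
        rstep_source_not_constr[OF D] rstep_target_constr[OF pc] by fastforce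
  qed
  then have "\<forall>i. \<exists>ph. i < ?n \<longrightarrow> \<pi>s ! i = [fst ph] \<and> hat (fst ph) = Some (snd ph)
      \<and> ground (snd ph) \<and> constr_term (injz R) (snd ph)
      \<and> cstep (injz R) (inj_term (?s i)) (pair (emb (?t i)) (snd ph))"
    by force
  then obtain F where F: "\<And>i. i < ?n \<Longrightarrow> \<pi>s ! i = [fst (F i)] \<and> hat (fst (F i)) = Some (snd (F i))
      \<and> ground (snd (F i)) \<and> constr_term (injz R) (snd (F i))
      \<and> cstep (injz R) (inj_term (?s i)) (pair (emb (?t i)) (snd (F i)))"
    by (metis choice)
  define hs where "hs = map (snd \<circ> F) [0..<?n]"
  have "hat (TT \<beta> (restr \<sigma> (Vb \<rho>)) \<pi>s) = Some (label_term \<beta> \<rho> \<sigma> hs)"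
    by (rule hat_TT_restr) (use 1(4) F in \<open>auto simp: hs_def\<close>)
  moreover have "ground (label_term \<beta> \<rho> \<sigma> hs) \<and> constr_term (injz R) (label_term \<beta> \<rho> \<sigma> hs)"
    by (rule label_term_ground_constr[OF D 1(2)]) (use F in \<open>auto simp: hs_def\<close>)
  moreover have "cstep (injz R) (inj_term (subst \<sigma> (lhs \<rho>)))
      (pair (emb (subst \<sigma> (rhs \<rho>))) (label_term \<beta> \<rho> \<sigma> hs))"
    by (rule cstep_injz_rule[OF pc 1(1,2)]) (use F in \<open>auto simp: hs_def\<close>)
  ultimately show ?case
    by auto
qed

section \<open>Reflecting injectivized steps\<close>

definition emb_gc_var :: "('l, 'f, 'v) lctrs \<Rightarrow> ('v + nat \<Rightarrow> ('f, 'l, 'v) iterm) \<Rightarrow> 'v \<Rightarrow> bool" where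
  "emb_gc_var R \<sigma>' x \<longleftrightarrow> (\<exists>w. \<sigma>' (Inl x) = emb w \<and> ground w \<and> constr_term R w)"

text \<open>Junk outside the range of \<open>emb\<close>; see \<open>emb_gc_varD\<close>.\<close>
definition strip_subst :: "('v + nat \<Rightarrow> ('f, 'l, 'v) iterm) \<Rightarrow> 'v \<Rightarrow> ('f, 'v) term" where
  "strip_subst \<sigma>' x = inv emb (\<sigma>' (Inl x))"

lemma emb_gc_varD:
  "emb_gc_var R \<sigma>' x \<Longrightarrow> \<sigma>' (Inl x) = emb (strip_subst \<sigma>' x)
    \<and> ground (strip_subst \<sigma>' x) \<and> constr_term R (strip_subst \<sigma>' x)"
  unfolding emb_gc_var_def strip_subst_def by (auto simp: inv_f_f[OF inj_emb])

lemma emb_gc_var_subst_emb: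
  assumes "subst \<sigma>' (emb l) = emb u" and "ground u" and "constr_term R u" and "x \<in> vars l"
  shows "emb_gc_var R \<sigma>' x"
  using subst_emb_eq_emb[OF assms(1,4)] assms(2,3) subterm_vars subterm_funs
  unfolding emb_gc_var_def ground_def constr_term_def by blast

lemma emb_gc_var_subst_inj_term:
  assumes "subst \<sigma>' (inj_term (Fun f ls)) = inj_term s" and "basic R s" and "ground s"
    and "x \<in> vars (Fun f ls)"
  shows "emb_gc_var R \<sigma>' x"
proof -
  obtain u where u: "u \<in> psubterms s" "\<sigma>' (Inl x) = emb u"
    using subst_inj_term_eq_inj_term[OF assms(1,4)] by blast
  obtain g us where "s = Fun g us" "\<forall>a \<in> set us. constr_term R a \<and> ground a"
    using assms(2,3) unfolding basic_def by auto
  then show ?thesis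
    using u subterm_vars subterm_funs unfolding emb_gc_var_def ground_def constr_term_def
    by fastforce
qed

text \<open>The induction invariant of the backward direction.\<close>
definition cstep_reflected ::
  "('l, 'f, 'v::linorder) lctrs \<Rightarrow> ('f, 'l, 'v) iterm \<Rightarrow> ('f, 'l, 'v) iterm \<Rightarrow> bool" where
  "cstep_reflected R u v \<longleftrightarrow> (\<forall>s. u = inj_term s \<longrightarrow> basic R s \<longrightarrow> ground s \<longrightarrow>
     (\<exists>t h. v = pair (emb t) h \<and> ground t \<and> constr_term R t
        \<and> (\<forall>\<pi>. safe_tt R \<pi> \<longrightarrow> hat \<pi> = Some h \<longrightarrow> rstep R (s, []) (t, [\<pi>]))))"

lemma emb_gc_var_rule_vars:
  fixes R :: "('l, 'f, 'v::linorder) lctrs"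
  assumes pc: "is_pcdctrs R" and \<rho>: "(\<beta>, \<rho>) \<in> R"
    and lhs: "subst \<sigma>' (inj_term (lhs \<rho>)) = inj_term s" and "basic R s" and "ground s"
    and conds: "\<And>i. i < length (conds \<rho>) \<Longrightarrow> cstep_reflected R
      (subst \<sigma>' (inj_term (fst (conds \<rho> ! i)))) (subst \<sigma>' (pair (emb (snd (conds \<rho> ! i))) (Var (Inr i))))"
  shows "\<forall>x \<in> rule_vars \<rho>. emb_gc_var R \<sigma>' x"
proof -
  have D: "is_dctrs R"
    using pc by (rule pcdctrs_dctrs)
  have lhs_vars: "emb_gc_var R \<sigma>' x" if "x \<in> vars (lhs \<rho>)" for x
  proof -
    obtain f ls where l: "lhs \<rho> = Fun f ls"
      using dctrs_lhs_Fun[OF D \<rho>] by blast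
    show ?thesis
      using emb_gc_var_subst_inj_term[OF lhs[unfolded l] \<open>basic R s\<close> \<open>ground s\<close> that[unfolded l]] .
  qed
  have target_vars: "\<forall>x \<in> vars (snd (conds \<rho> ! i)). emb_gc_var R \<sigma>' x"
    if source_vars: "\<forall>x \<in> vars (fst (conds \<rho> ! i)). emb_gc_var R \<sigma>' x"
      and i: "i < length (conds \<rho>)" for i
  proof -
    let ?\<sigma> = "strip_subst \<sigma>'"
    have emb_gc: "\<sigma>' (Inl x) = emb (?\<sigma> x) \<and> ground (?\<sigma> x) \<and> constr_term R (?\<sigma> x)"
      if "x \<in> vars (fst (conds \<rho> ! i))" for x
      by (rule emb_gc_varD[OF bspec[OF source_vars that]])
    then have \<sigma>: "gc_subst R (vars (fst (conds \<rho> ! i))) ?\<sigma>"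
      and emb: "\<And>x. x \<in> vars (fst (conds \<rho> ! i)) \<Longrightarrow> \<sigma>' (Inl x) = emb (?\<sigma> x)"
      by (simp_all add: gc_subst_def)
    obtain g us where si: "fst (conds \<rho> ! i) = Fun g us"
      using pcdctrs_cond_source[OF pc \<rho> i] unfolding basic_def by blast
    have "subst \<sigma>' (inj_term (fst (conds \<rho> ! i))) = inj_term (subst ?\<sigma> (fst (conds \<rho> ! i)))"
      using emb unfolding si by (rule subst_inj_term)
    moreover have "ground (subst ?\<sigma> (fst (conds \<rho> ! i))) \<and> basic R (subst ?\<sigma> (fst (conds \<rho> ! i)))"
      by (rule basic_subst[OF \<sigma> order_refl pcdctrs_cond_source[OF pc \<rho> i]])
    ultimately obtain t h where
      "subst \<sigma>' (pair (emb (snd (conds \<rho> ! i))) (Var (Inr i))) = pair (emb t) h" "ground t" "constr_term R t"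
      using conds[OF i] unfolding cstep_reflected_def by blast
    then show ?thesis
      using emb_gc_var_subst_emb[of \<sigma>' "snd (conds \<rho> ! i)" t] by simp
  qed
  have "\<forall>x \<in> vars (snd (conds \<rho> ! i)). emb_gc_var R \<sigma>' x" if "i < length (conds \<rho>)" for i
    using that
  proof (induction i rule: less_induct)
    case (less i)
    have "emb_gc_var R \<sigma>' x" if "x \<in> vars (fst (conds \<rho> ! i))" for x
    proof -
      have "x \<in> vars (lhs \<rho>) \<or> (\<exists>j<i. x \<in> vars (snd (conds \<rho> ! j)))"
        using dctrs_cond_vars[OF D \<rho> less.prems] that by auto
      then show ?thesis
      proof
        assume "\<exists>j<i. x \<in> vars (snd (conds \<rho> ! j))"
        then obtain j where "j < i" "x \<in> vars (snd (conds \<rho> ! j))"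
          by blast
        then show ?thesis
          using less.IH[of j] less.prems by simp
      qed (rule lhs_vars)
    qed
    then show ?case
      using target_vars less.prems by blast
  qed
  then show ?thesis
    using dctrs_rule_var_cases[OF D \<rho>] lhs_vars by blast
qed

lemma rstep_of_reflected_conds:
  fixes R :: "('l, 'f, 'v::linorder) lctrs"
  assumes pc: "is_pcdctrs R" and \<rho>: "(\<beta>, \<rho>) \<in> R" and \<sigma>: "gc_subst R (rule_vars \<rho>) \<sigma>"
    and emb: "\<And>x. x \<in> rule_vars \<rho> \<Longrightarrow> \<sigma>' (Inl x) = emb (\<sigma> x)"
    and conds: "\<And>i. i < length (conds \<rho>) \<Longrightarrow> cstep_reflected R
      (subst \<sigma>' (inj_term (fst (conds \<rho> ! i)))) (subst \<sigma>' (pair (emb (snd (conds \<rho> ! i))) (Var (Inr i))))"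
    and safe: "safe_tt R \<pi>"
    and hat: "hat \<pi> = Some (label_term \<beta> \<rho> \<sigma> (map (\<lambda>i. \<sigma>' (Inr i)) [0..<length (conds \<rho>)]))"
  shows "rstep R (subst \<sigma> (lhs \<rho>), []) (subst \<sigma> (rhs \<rho>), [\<pi>])"
proof -
  obtain \<pi>s where \<pi>: "\<pi> = TT \<beta> (restr \<sigma> (Vb \<rho>)) \<pi>s" and len: "length \<pi>s = length (conds \<rho>)"
    and sub: "\<And>i. i < length \<pi>s \<Longrightarrow>
      \<exists>p. \<pi>s ! i = [p] \<and> hat p = Some (map (\<lambda>i. \<sigma>' (Inr i)) [0..<length (conds \<rho>)] ! i) \<and> safe_tt R p"
    using hat_eq_label_termE[OF pcdctrs_dctrs[OF pc] \<rho> safe hat] by blast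
  have "(rstep R)\<^sup>*\<^sup>* (subst \<sigma> (fst (conds \<rho> ! i)), []) (subst \<sigma> (snd (conds \<rho> ! i)), \<pi>s ! i)"
    if i: "i < length (conds \<rho>)" for i
  proof -
    obtain p where p: "\<pi>s ! i = [p]" "hat p = Some (\<sigma>' (Inr i))" "safe_tt R p"
      using sub[of i] i len by auto
    obtain g us where si: "fst (conds \<rho> ! i) = Fun g us"
      using pcdctrs_cond_source[OF pc \<rho> i] unfolding basic_def by blast
    have source: "subst \<sigma>' (inj_term (fst (conds \<rho> ! i))) = inj_term (subst \<sigma> (fst (conds \<rho> ! i)))"
      unfolding si by (rule subst_inj_term) (use emb rule_vars_cond[OF i] si in auto)
    have target: "subst \<sigma>' (emb (snd (conds \<rho> ! i))) = emb (subst \<sigma> (snd (conds \<rho> ! i)))"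
      by (rule subst_emb) (use emb rule_vars_cond[OF i] in auto)
    have "ground (subst \<sigma> (fst (conds \<rho> ! i))) \<and> basic R (subst \<sigma> (fst (conds \<rho> ! i)))"
      using basic_subst[OF \<sigma> _ pcdctrs_cond_source[OF pc \<rho> i]] rule_vars_cond[OF i] by blast
    then obtain t h where th: "subst \<sigma>' (pair (emb (snd (conds \<rho> ! i))) (Var (Inr i))) = pair (emb t) h"
      and steps: "\<forall>\<pi>. safe_tt R \<pi> \<longrightarrow> hat \<pi> = Some h \<longrightarrow> rstep R (subst \<sigma> (fst (conds \<rho> ! i)), []) (t, [\<pi>])"
      using conds[OF i, unfolded cstep_reflected_def, rule_format, OF source] by blast
    have "t = subst \<sigma> (snd (conds \<rho> ! i))" "h = \<sigma>' (Inr i)"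
      using th target by simp_all
    then show ?thesis
      using steps p by auto
  qed
  then show ?thesis
    using rstep.intros[OF \<rho> \<sigma> _ len] \<pi> by (simp add: safe_trace_def)
qed

lemma cstep_reflected_irule_instance:
  fixes R :: "('l, 'f, 'v::linorder) lctrs"
  assumes pc: "is_pcdctrs R" and \<rho>: "(\<beta>, \<rho>) \<in> R"
    and conds: "\<And>i. i < length (conds \<rho>) \<Longrightarrow> cstep_reflected R
      (subst \<sigma>' (inj_term (fst (conds \<rho> ! i)))) (subst \<sigma>' (pair (emb (snd (conds \<rho> ! i))) (Var (Inr i))))"
  shows "cstep_reflected R (subst \<sigma>' (lhs (irule \<beta> \<rho>))) (subst \<sigma>' (rhs (irule \<beta> \<rho>)))"
  unfolding cstep_reflected_def
proof (intro allI impI)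
  fix s assume lhs: "subst \<sigma>' (lhs (irule \<beta> \<rho>)) = inj_term s" and "basic R s" "ground s"
  let ?\<sigma> = "strip_subst \<sigma>'"
  have emb_gc_vars: "\<forall>x \<in> rule_vars \<rho>. emb_gc_var R \<sigma>' x"
    by (rule emb_gc_var_rule_vars[OF pc \<rho> lhs[unfolded irule_simps] \<open>basic R s\<close> \<open>ground s\<close> conds])
  have "\<sigma>' (Inl x) = emb (?\<sigma> x) \<and> ground (?\<sigma> x) \<and> constr_term R (?\<sigma> x)"
    if "x \<in> rule_vars \<rho>" for x
    by (rule emb_gc_varD[OF bspec[OF emb_gc_vars that]])
  then have \<sigma>: "gc_subst R (rule_vars \<rho>) ?\<sigma>"
    and emb: "\<And>x. x \<in> rule_vars \<rho> \<Longrightarrow> \<sigma>' (Inl x) = emb (?\<sigma> x)"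
    by (simp_all add: gc_subst_def)
  obtain f ls where l: "lhs \<rho> = Fun f ls"
    using dctrs_lhs_Fun[OF pcdctrs_dctrs[OF pc] \<rho>] by blast
  have lhs': "subst \<sigma>' (lhs (irule \<beta> \<rho>)) = inj_term (subst ?\<sigma> (lhs \<rho>))"
    unfolding irule_simps l by (rule subst_inj_term) (use emb rule_vars_lhs[of \<rho>] l in auto)
  have "(inj_term (subst ?\<sigma> (lhs \<rho>)) :: ('f, 'l, 'v) iterm) = inj_term s"
    using trans[OF sym[OF lhs'] lhs] .
  then have s: "s = subst ?\<sigma> (lhs \<rho>)"
    unfolding l subst.simps inj_term_Fun_eq_iff .
  show "\<exists>t h. subst \<sigma>' (rhs (irule \<beta> \<rho>)) = pair (emb t) h \<and> ground t \<and> constr_term R t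
      \<and> (\<forall>\<pi>. safe_tt R \<pi> \<longrightarrow> hat \<pi> = Some h \<longrightarrow> rstep R (s, []) (t, [\<pi>]))"
  proof (intro exI conjI allI impI)
    show "subst \<sigma>' (rhs (irule \<beta> \<rho>)) = pair (emb (subst ?\<sigma> (rhs \<rho>)))
        (label_term \<beta> \<rho> ?\<sigma> (map (\<lambda>i. \<sigma>' (Inr i)) [0..<length (conds \<rho>)]))"
      by (rule subst_rhs_irule) (rule emb)
    show "ground (subst ?\<sigma> (rhs \<rho>))" "constr_term R (subst ?\<sigma> (rhs \<rho>))"
      using constr_subst[OF \<sigma> rule_vars_rhs pcdctrs_rhs[OF pc \<rho>]] by simp_all
    fix \<pi> assume "safe_tt R \<pi>"
      and "hat \<pi> = Some (label_term \<beta> \<rho> ?\<sigma> (map (\<lambda>i. \<sigma>' (Inr i)) [0..<length (conds \<rho>)]))"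
    then show "rstep R (s, []) (subst ?\<sigma> (rhs \<rho>), [\<pi>])"
      using rstep_of_reflected_conds[where \<sigma>' = \<sigma>', OF pc \<rho> \<sigma> emb conds] unfolding s by blast
  qed
qed

lemma cstep_injz_reflected:
  fixes R :: "('l, 'f, 'v::linorder) lctrs"
  assumes pc: "is_pcdctrs R"
  shows "cstep (injz R) u v \<Longrightarrow> cstep_reflected R u v"
proof (induction rule: cstep.induct)
  case (ctxt u u' ss ts f)
  have "constr_term (injz R) u" if eq: "Fun f (ss @ u # ts) = inj_term s" for s
  proof -
    obtain us where args: "ss @ u # ts = map emb us"
      using eq by (cases s) auto
    have "u \<in> set (map emb us)"
      unfolding args[symmetric] by simp
    then show ?thesis
      using constr_injz_emb[OF pcdctrs_dctrs[OF pc]] by auto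
  qed
  then have "\<nexists>s. Fun f (ss @ u # ts) = inj_term s"
    using cstep_source_not_constr[OF injz_dctrs[OF pcdctrs_dctrs[OF pc]] ctxt(1)] by blast
  then show ?case
    unfolding cstep_reflected_def by simp
next
  case (top \<beta> \<rho>' \<sigma>')
  obtain \<rho> where \<rho>: "(\<beta>, \<rho>) \<in> R" and \<rho>': "\<rho>' = irule \<beta> \<rho>"
    using top(1) unfolding mem_injz by blast
  have conds: "cstep_reflected R (subst \<sigma>' (inj_term (fst (conds \<rho> ! i))))
      (subst \<sigma>' (pair (emb (snd (conds \<rho> ! i))) (Var (Inr i))))" if i: "i < length (conds \<rho>)" for i
  proof -
    have i': "i < length (conds \<rho>')"
      using i by (simp add: \<rho>')
    have "cstep (injz R) (subst \<sigma>' (fst (conds \<rho>' ! i))) (subst \<sigma>' (snd (conds \<rho>' ! i)))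
        \<and> cstep_reflected R (subst \<sigma>' (fst (conds \<rho>' ! i))) (subst \<sigma>' (snd (conds \<rho>' ! i)))"
      by (rule pcdctrs_cond_single_step[OF injz_pcdctrs[OF pc] top(1,2) i' top.IH[rule_format, OF i']])
        simp
    then show ?thesis
      using i by (simp add: \<rho>')
  qed
  show ?case
    unfolding \<rho>' by (rule cstep_reflected_irule_instance[OF pc \<rho> conds])
qed

theorem mainTheorem17:
  fixes R :: "('l, 'f, 'v::linorder) lctrs"
  assumes "is_pcdctrs R"
  shows "is_pcdctrs (injz R) \<and>
    (\<forall>(s :: ('f, 'v) term) (t :: ('f, 'v) term) (\<pi> :: ('l, 'f, 'v) trace_term).
       basic R s \<and> ground s \<and> safe_tt R \<pi> \<longrightarrow>
       (rstep R (s, []) (t, [\<pi>]) \<longleftrightarrow>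
        (\<exists>h. hat \<pi> = Some h \<and> cstep (injz R) (inj_term s) (pair (emb t) h))))"
proof (intro conjI allI impI iffI)
  show "is_pcdctrs (injz R)"
    using assms by (rule injz_pcdctrs)
next
  fix s t :: "('f, 'v) term" and \<pi> :: "('l, 'f, 'v) trace_term"
  assume "rstep R (s, []) (t, [\<pi>])"
  then show "\<exists>h. hat \<pi> = Some h \<and> cstep (injz R) (inj_term s) (pair (emb t) h)"
    using rstep_imp_cstep_injz[OF assms] by fastforce
next
  fix s t :: "('f, 'v) term" and \<pi> :: "('l, 'f, 'v) trace_term"
  assume s: "basic R s \<and> ground s \<and> safe_tt R \<pi>"
    and "\<exists>h. hat \<pi> = Some h \<and> cstep (injz R) (inj_term s) (pair (emb t) h)"
  then obtain h where "hat \<pi> = Some h" and "cstep (injz R) (inj_term s) (pair (emb t) h)"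
    by blast
  then show "rstep R (s, []) (t, [\<pi>])"
    using cstep_injz_reflected[OF assms] s unfolding cstep_reflected_def by fastforce
qed

end
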